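(* Let $\xi(t)=(\xi_1(t),\dots,\xi_d(t))$, $t\geq 0$, be a continuous path in $\mathbb{R}^d$ such that the integrals $\int_0^t\xi(s)ds$ and $\int_0^t|\xi(s)|ds$ exist for all $t\geq0$. For $\nu\geq1$ and $1\leq i_1,\dots,i_\nu\leq d$ define \[ \Sigma^{i_1,\dots,i_\nu}(t)=\int_{0\leq s_1\leq\dots\leq s_\nu\leq t}\xi_{i_1}(s_1)\cdots\xi_{i_\nu}(s_\nu)\,ds_1\cdots ds_\nu . \] Suppose that \[ \limsup_{t\to\infty} t^{-1}\int_{0}^t|\xi(s)|ds=R<\infty \] and that the limit \[ \lim_{t\to\infty}t^{-1}\int_{0}^t\xi(s)ds=Q=(Q_1,\dots,Q_d) \] exists with $|Q|<\infty$. Then for any $\nu\geq 1$ and $1\leq i_1,\dots,i_\nu\leq d$, \[ \lim_{t\to\infty}t^{-\nu}\Sigma^{i_1,\dots,i_\nu}(t)=\frac 1{\nu !}\prod_{j=1}^\nu Q_{i_j}. \]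
   Context: $|\cdot|$ denotes the Euclidean norm on $\mathbb{R}^d$. *)

theory Defs
  imports "HOL-Analysis.Analysis"
begin

definition ord_simplex :: "nat \<Rightarrow> real \<Rightarrow> (nat \<Rightarrow> real) set" where
  "ord_simplex n t = {s \<in> space (PiM {..<n} (\<lambda>_. lborel)).
      (\<forall>j<n. 0 \<le> s j \<and> s j \<le> t) \<and> (\<forall>j. Suc j < n \<longrightarrow> s j \<le> s (Suc j))}"

definition Sigma :: "(real \<Rightarrow> real ^ 'd) \<Rightarrow> 'd list \<Rightarrow> real \<Rightarrow> real" where
  "Sigma \<xi> is t = (LINT s : ord_simplex (length is) t | PiM {..<length is} (\<lambda>_. lborel).
      (\<Prod>j<length is. \<xi> (s j) $ (is ! j)))"

end

theory Submission
  imports Defs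
begin

text \<open>Write Sigma_n for the signature of the first n indices. Fubini's theorem on the simplex
  gives the recursion Sigma_(n+1)(t) = int_0^t xi_i(s) Sigma_n(s) ds with i the (n+1)-st index,
  and by induction Sigma_n(s) = c s^n + o(s^n) with c = Q_i1 ... Q_in / n!. In the main term,
  integration by parts turns int_0^t xi_i ~ Q_i t into int_0^t xi_i(s) s^n ds ~ Q_i t^(n+1) / (n+1);
  the error term is o(t^(n+1)) because int_0^t |xi| = O(t) by the limsup hypothesis.\<close>

fun iterated_integral :: "(nat \<Rightarrow> real \<Rightarrow> real) \<Rightarrow> nat \<Rightarrow> real \<Rightarrow> real" where
  "iterated_integral f 0 t = 1"
| "iterated_integral f (Suc n) t = integral {0..t} (\<lambda>s. f n s * iterated_integral f n s)"

lemma continuous_on_iterated_integral: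
  assumes "\<And>j. continuous_on UNIV (f j)"
  shows "continuous_on {0..b} (iterated_integral f n)"
proof (induction n arbitrary: b)
  case (Suc n)
  have "(\<lambda>s. f n s * iterated_integral f n s) integrable_on {0..b}"
    by (intro integrable_continuous_interval continuous_intros Suc continuous_on_subset[OF assms]) simp
  then show ?case by (simp add: indefinite_integral_continuous_1)
qed simp

lemma integral_has_real_derivative_at:
  fixes g :: "real \<Rightarrow> real"
  assumes "continuous_on UNIV g" "t > 0"
  shows "((\<lambda>x. integral {0..x} g) has_real_derivative g t) (at t)"
proof -
  have "((\<lambda>x. integral {0..x} g) has_real_derivative g t) (at t within {0..t+1})"
    using assms by (intro integral_has_real_derivative continuous_on_subset[OF assms(1)]) auto
  moreover have "at t within {0..t+1} = at t"
    using assms by (intro at_within_interior) simp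
  ultimately show ?thesis by simp
qed

lemma tendsto_integral_mult_power:
  fixes h :: "real \<Rightarrow> real"
  assumes h: "continuous_on UNIV h"
    and lim: "((\<lambda>t. integral {0..t} h / t) \<longlongrightarrow> q) at_top"
  shows "((\<lambda>t. integral {0..t} (\<lambda>s. h s * s ^ n) / t ^ Suc n) \<longlongrightarrow> q / Suc n) at_top"
proof -
  define F where "F t = integral {0..t} h" for t
  define G where "G t = integral {0..t} (\<lambda>s. h s * s ^ n)" for t
  \<comment> \<open>By parts, \<open>G t = F t * t ^ n - P t\<close> with \<open>P' = n F t ^ (n - 1)\<close>, so l'Hopital applies to \<open>P\<close>.\<close>
  define P where "P t = F t * t ^ n - G t" for t
  have P_deriv: "(P has_real_derivative F t * (real n * t ^ (n - 1))) (at t)" if "t > 0" for t :: real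
  proof -
    have "(F has_real_derivative h t) (at t)"
      unfolding F_def[abs_def] using h that by (rule integral_has_real_derivative_at)
    moreover have "(G has_real_derivative h t * t ^ n) (at t)"
      unfolding G_def[abs_def] using h that by (intro integral_has_real_derivative_at continuous_intros)
    ultimately show ?thesis
      unfolding P_def[abs_def] by (auto intro!: derivative_eq_intros simp: algebra_simps)
  qed
  have "((\<lambda>t. P t / t ^ Suc n) \<longlongrightarrow> n / Suc n * q) at_top"
  proof (rule lhospital_at_top_at_top[where f' = "\<lambda>t. F t * (real n * t ^ (n - 1))"
        and g' = "\<lambda>t. real (Suc n) * t ^ n"])
    show "filterlim (\<lambda>t::real. t ^ Suc n) at_top at_top"
      by (intro filterlim_pow_at_top filterlim_ident) simp
    show "\<forall>\<^sub>F t in at_top. real (Suc n) * t ^ n \<noteq> 0"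
      using eventually_gt_at_top[of 0] by eventually_elim simp
    show "\<forall>\<^sub>F t in at_top. (P has_real_derivative F t * (real n * t ^ (n - 1))) (at t)"
      using eventually_gt_at_top[of 0] by eventually_elim (rule P_deriv)
    show "\<forall>\<^sub>F t in at_top. ((\<lambda>t. t ^ Suc n) has_real_derivative real (Suc n) * t ^ n) (at t)"
      by (intro always_eventually allI) (use DERIV_pow[of "Suc n"] in simp)
    have "\<forall>\<^sub>F t in at_top. n / Suc n * (F t / t) = F t * (real n * t ^ (n - 1)) / (real (Suc n) * t ^ n)"
      using eventually_gt_at_top[of 0] by eventually_elim (cases n, simp_all add: divide_simps)
    moreover have "((\<lambda>t. n / Suc n * (F t / t)) \<longlongrightarrow> n / Suc n * q) at_top"
      using lim unfolding F_def by (intro tendsto_intros)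
    ultimately show "((\<lambda>t. F t * (real n * t ^ (n - 1)) / (real (Suc n) * t ^ n)) \<longlongrightarrow> n / Suc n * q) at_top"
      by (rule Lim_transform_eventually[rotated])
  qed
  then have "((\<lambda>t. F t / t - P t / t ^ Suc n) \<longlongrightarrow> q - n / Suc n * q) at_top"
    using lim unfolding F_def by (intro tendsto_diff)
  also have "q - n / Suc n * q = q / Suc n"
    by (simp add: field_simps)
  finally have "((\<lambda>t. F t / t - P t / t ^ Suc n) \<longlongrightarrow> q / Suc n) at_top" .
  moreover have "\<forall>\<^sub>F t in at_top. F t / t - P t / t ^ Suc n = G t / t ^ Suc n"
    using eventually_gt_at_top[of 0] by eventually_elim (simp add: P_def diff_divide_distrib)
  ultimately show ?thesis
    unfolding G_def by (rule Lim_transform_eventually)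
qed

lemma little_o_power_bound:
  fixes e :: "real \<Rightarrow> real"
  assumes e: "\<And>b. continuous_on {0..b} e" and e_small: "((\<lambda>s. e s / s ^ n) \<longlongrightarrow> 0) at_top"
    and "\<delta> > 0"
  obtains K where "K \<ge> 0" "\<And>s. s \<ge> 0 \<Longrightarrow> \<bar>e s\<bar> \<le> K + \<delta> * s ^ n"
proof -
  obtain T where T: "\<And>s. s \<ge> T \<Longrightarrow> \<bar>e s / s ^ n\<bar> < \<delta>"
    using order_tendstoD(2)[OF tendsto_rabs_zero[OF e_small] \<open>\<delta> > 0\<close>]
    unfolding eventually_at_top_linorder by blast
  obtain K where K: "\<And>s. s \<in> {0..max 1 T} \<Longrightarrow> \<bar>e s\<bar> \<le> K"
    using compact_imp_bounded[OF compact_continuous_image[OF e compact_Icc]]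
    unfolding bounded_real by blast
  show ?thesis
  proof
    have "0 \<in> {0..max 1 T}"
      by simp
    then show "K \<ge> 0"
      using K by (meson abs_ge_zero order_trans)
    show "\<bar>e s\<bar> \<le> K + \<delta> * s ^ n" if "s \<ge> 0" for s
    proof (cases "s \<le> max 1 T")
      case True
      moreover have "\<delta> * s ^ n \<ge> 0"
        using \<open>\<delta> > 0\<close> that by simp
      ultimately show ?thesis
        using K[of s] that by simp
    next
      case False
      then have "\<bar>e s\<bar> < \<delta> * s ^ n"
        using T[of s] by (simp add: abs_div divide_less_eq)
      then show ?thesis
        using \<open>K \<ge> 0\<close> by linarith
    qed
  qed
qed

lemma abs_integral_mult_le:
  fixes h e :: "real \<Rightarrow> real"
  assumes "continuous_on {a..b} h" "continuous_on {a..b} e"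
    and bound: "\<And>s. s \<in> {a..b} \<Longrightarrow> \<bar>e s\<bar> \<le> B"
  shows "\<bar>integral {a..b} (\<lambda>s. h s * e s)\<bar> \<le> integral {a..b} (\<lambda>s. \<bar>h s\<bar>) * B"
proof -
  have "norm (integral {a..b} (\<lambda>s. h s * e s)) \<le> integral {a..b} (\<lambda>s. \<bar>h s\<bar> * B)"
  proof (rule integral_norm_bound_integral)
    show "(\<lambda>s. h s * e s) integrable_on {a..b}" "(\<lambda>s. \<bar>h s\<bar> * B) integrable_on {a..b}"
      by (intro integrable_continuous_interval continuous_intros assms)+
    show "norm (h s * e s) \<le> \<bar>h s\<bar> * B" if "s \<in> {a..b}" for s
      using bound[OF that] by (simp add: abs_mult mult_left_mono)
  qed
  then show ?thesis
    by (simp add: integral_mult_left)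
qed

lemma tendsto_integral_mult_little_o:
  fixes h e :: "real \<Rightarrow> real"
  assumes h: "continuous_on UNIV h" and e: "\<And>b. continuous_on {0..b} e" and "n > 0"
    and h_growth: "eventually (\<lambda>t. integral {0..t} (\<lambda>s. \<bar>h s\<bar>) \<le> C * t) at_top"
    and e_small: "((\<lambda>s. e s / s ^ n) \<longlongrightarrow> 0) at_top"
  shows "((\<lambda>t. integral {0..t} (\<lambda>s. h s * e s) / t ^ Suc n) \<longlongrightarrow> 0) at_top"
  unfolding tendsto_iff dist_real_def
proof (intro allI impI)
  fix \<epsilon> :: real
  assume "\<epsilon> > 0"
  define C' where "C' = \<bar>C\<bar> + 1"
  define \<delta> where "\<delta> = \<epsilon> / (2 * C')"
  have "C' > 0" "\<delta> > 0"
    using \<open>\<epsilon> > 0\<close> by (auto simp: C'_def \<delta>_def)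
  obtain K where "K \<ge> 0" and K: "\<And>s. s \<ge> 0 \<Longrightarrow> \<bar>e s\<bar> \<le> K + \<delta> * s ^ n"
    using little_o_power_bound[OF e e_small \<open>\<delta> > 0\<close>] by blast
  have "((\<lambda>t. C' * K / t ^ n) \<longlongrightarrow> 0) at_top"
    by (intro tendsto_divide_0[OF tendsto_const] filterlim_at_top_imp_at_infinity
        filterlim_pow_at_top filterlim_ident \<open>n > 0\<close>)
  moreover have "0 < \<epsilon> / 2"
    using \<open>\<epsilon> > 0\<close> by simp
  ultimately have "\<forall>\<^sub>F t in at_top. C' * K / t ^ n < \<epsilon> / 2"
    by (rule order_tendstoD(2))
  then show "\<forall>\<^sub>F t in at_top. \<bar>integral {0..t} (\<lambda>s. h s * e s) / t ^ Suc n - 0\<bar> < \<epsilon>"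
    using h_growth eventually_gt_at_top[of 0]
  proof eventually_elim
    case (elim t)
    have "\<bar>e s\<bar> \<le> K + \<delta> * t ^ n" if "s \<in> {0..t}" for s
    proof -
      have "\<delta> * s ^ n \<le> \<delta> * t ^ n"
        using that \<open>\<delta> > 0\<close> by (intro mult_left_mono power_mono) auto
      then show ?thesis
        using K[of s] that by simp
    qed
    then have "\<bar>integral {0..t} (\<lambda>s. h s * e s)\<bar> \<le> integral {0..t} (\<lambda>s. \<bar>h s\<bar>) * (K + \<delta> * t ^ n)"
      by (rule abs_integral_mult_le[OF continuous_on_subset[OF h subset_UNIV] e])
    also have "\<dots> \<le> C' * t * (K + \<delta> * t ^ n)"
    proof (rule mult_right_mono)
      have "C * t \<le> C' * t"
        using elim by (intro mult_right_mono) (auto simp: C'_def)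
      then show "integral {0..t} (\<lambda>s. \<bar>h s\<bar>) \<le> C' * t"
        using elim by linarith
      show "0 \<le> K + \<delta> * t ^ n"
        using elim \<open>K \<ge> 0\<close> \<open>\<delta> > 0\<close> by simp
    qed
    finally have "\<bar>integral {0..t} (\<lambda>s. h s * e s)\<bar> / t ^ Suc n \<le> C' * t * (K + \<delta> * t ^ n) / t ^ Suc n"
      by (rule divide_right_mono) (use elim in simp)
    also have "\<dots> = C' * K / t ^ n + \<epsilon> / 2"
      using elim \<open>C' > 0\<close> by (simp add: \<delta>_def field_simps)
    also have "\<dots> < \<epsilon>"
      using elim(1) by linarith
    finally show ?case
      using elim by (simp add: abs_div)
  qed
qed

lemma tendsto_iterated_integral:
  assumes f: "\<And>j. continuous_on UNIV (f j)"
    and average: "\<And>j. ((\<lambda>t. integral {0..t} (f j) / t) \<longlongrightarrow> q j) at_top"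
    and growth: "\<And>j. \<exists>C. eventually (\<lambda>t. integral {0..t} (\<lambda>s. \<bar>f j s\<bar>) \<le> C * t) at_top"
  shows "((\<lambda>t. iterated_integral f n t / t ^ n) \<longlongrightarrow> (\<Prod>j<n. q j) / fact n) at_top"
proof (induction n)
  case (Suc n)
  define c where "c = (\<Prod>j<n. q j) / fact n"
  define e where "e s = iterated_integral f n s - c * s ^ n" for s
  have e_cont: "continuous_on {0..b} e" for b
    unfolding e_def by (intro continuous_intros continuous_on_iterated_integral f)
  have split: "iterated_integral f (Suc n) t
      = c * integral {0..t} (\<lambda>s. f n s * s ^ n) + integral {0..t} (\<lambda>s. f n s * e s)" for t
  proof -
    have fc: "continuous_on {0..t} (f n)"
      using f by (rule continuous_on_subset) simp
    have "iterated_integral f (Suc n) t = integral {0..t} (\<lambda>s. c * (f n s * s ^ n) + f n s * e s)"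
      by (simp add: e_def algebra_simps)
    also have "\<dots> = integral {0..t} (\<lambda>s. c * (f n s * s ^ n)) + integral {0..t} (\<lambda>s. f n s * e s)"
      by (intro integral_add integrable_continuous_interval continuous_intros fc e_cont)
    finally show ?thesis
      by simp
  qed
  have main: "((\<lambda>t. integral {0..t} (\<lambda>s. f n s * s ^ n) / t ^ Suc n) \<longlongrightarrow> q n / Suc n) at_top"
    by (rule tendsto_integral_mult_power[OF f average])
  have error: "((\<lambda>t. integral {0..t} (\<lambda>s. f n s * e s) / t ^ Suc n) \<longlongrightarrow> 0) at_top"
  proof (cases "n = 0")
    case True
    then show ?thesis
      by (simp add: e_def c_def)
  next
    case False
    have "((\<lambda>s. iterated_integral f n s / s ^ n - c) \<longlongrightarrow> c - c) at_top"
      using Suc.IH unfolding c_def by (intro tendsto_diff tendsto_const)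
    moreover have "\<forall>\<^sub>F s in at_top. iterated_integral f n s / s ^ n - c = e s / s ^ n"
      using eventually_gt_at_top[of 0] by eventually_elim (simp add: e_def diff_divide_distrib)
    ultimately have "((\<lambda>s. e s / s ^ n) \<longlongrightarrow> 0) at_top"
      by (simp add: Lim_transform_eventually)
    moreover obtain C where "eventually (\<lambda>t. integral {0..t} (\<lambda>s. \<bar>f n s\<bar>) \<le> C * t) at_top"
      using growth by blast
    ultimately show ?thesis
      using False by (intro tendsto_integral_mult_little_o[OF f e_cont]) auto
  qed
  have "((\<lambda>t. c * (integral {0..t} (\<lambda>s. f n s * s ^ n) / t ^ Suc n)
      + integral {0..t} (\<lambda>s. f n s * e s) / t ^ Suc n) \<longlongrightarrow> c * (q n / Suc n) + 0) at_top"
    by (intro tendsto_intros main error)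
  moreover have "c * (q n / Suc n) + 0 = (\<Prod>j<Suc n. q j) / fact (Suc n)"
    by (simp add: c_def field_simps)
  ultimately show ?case
    unfolding split by (simp add: add_divide_distrib)
qed simp

lemma (in product_sigma_finite) product_integral_insert_rev:
  fixes f :: "_ \<Rightarrow> _::{banach, second_countable_topology}"
  assumes I: "finite I" "i \<notin> I" and f: "integrable (Pi\<^sub>M (insert i I) M) f"
  shows "integral\<^sup>L (Pi\<^sub>M (insert i I) M) f = (\<integral>y. (\<integral>x. f (x(i := y)) \<partial>Pi\<^sub>M I M) \<partial>M i)"
proof -
  interpret I: finite_product_sigma_finite M I
    by standard (use I in auto)
  have [measurable]: "f \<in> borel_measurable (Pi\<^sub>M (insert i I) M)"
    using f by auto
  have "integral\<^sup>L (Pi\<^sub>M (insert i I) M) f = integral\<^sup>L (Pi\<^sub>M ({i} \<union> I) M) f"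
    by simp
  also have "\<dots> = (\<integral>y. (\<integral>x. f (merge {i} I (y, x)) \<partial>Pi\<^sub>M I M) \<partial>Pi\<^sub>M {i} M)"
    using I f by (intro product_integral_fold) auto
  also have "\<dots> = (\<integral>y. (\<lambda>z. \<integral>x. f (x(i := z)) \<partial>Pi\<^sub>M I M) (y i) \<partial>Pi\<^sub>M {i} M)"
    using I by (intro Bochner_Integration.integral_cong arg_cong[where f = f] refl)
      (auto simp: merge_def space_PiM PiE_def extensional_def fun_eq_iff)
  also have "\<dots> = (\<integral>y. (\<integral>x. f (x(i := y)) \<partial>Pi\<^sub>M I M) \<partial>M i)"
    using I by (intro product_integral_singleton) measurable
  finally show ?thesis .
qed

lemma sets_ord_simplex: "ord_simplex n t \<in> sets (PiM {..<n} (\<lambda>_. lborel))"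
proof -
  let ?M = "PiM {..<n} (\<lambda>_. lborel :: real measure)"
  have coord: "(\<lambda>s. s j) \<in> borel_measurable ?M" if "j < n" for j
    using measurable_component_singleton[of j "{..<n}" "\<lambda>_. lborel"] that by simp
  have "ord_simplex n t = {s \<in> space ?M.
      \<forall>j\<in>{..<n}. 0 \<le> s j \<and> s j \<le> t \<and> (Suc j < n \<longrightarrow> s j \<le> s (Suc j))}"
    by (auto simp: ord_simplex_def)
  also have "\<dots> \<in> sets ?M"
  proof (intro sets.sets_Collect_finite_All sets.sets_Collect_conj)
    fix j assume "j \<in> {..<n}"
    then show "{s \<in> space ?M. 0 \<le> s j} \<in> sets ?M" "{s \<in> space ?M. s j \<le> t} \<in> sets ?M"
      by (auto intro!: borel_measurable_le coord)
    show "{s \<in> space ?M. Suc j < n \<longrightarrow> s j \<le> s (Suc j)} \<in> sets ?M"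
      by (cases "Suc j < n") (auto intro!: borel_measurable_le coord)
  qed simp
  finally show ?thesis .
qed

lemma set_integrable_ord_simplex:
  fixes f :: "nat \<Rightarrow> real \<Rightarrow> real"
  assumes f: "\<And>j. continuous_on UNIV (f j)"
  shows "set_integrable (PiM {..<n} (\<lambda>_. lborel)) (ord_simplex n t) (\<lambda>s. \<Prod>j<n. f j (s j))"
proof (rule set_integrable_subset)
  interpret product_sigma_finite "\<lambda>_::nat. lborel :: real measure"
    by standard
  let ?M = "PiM {..<n} (\<lambda>_. lborel :: real measure)"
  let ?B = "PiE {..<n} (\<lambda>_. {0..t})"
  have box_integrable: "integrable ?M (\<lambda>s. \<Prod>j<n. indicator {0..t} (s j) *\<^sub>R f j (s j))"
    using borel_integrable_atLeastAtMost'[OF continuous_on_subset[OF f]]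
    unfolding set_integrable_def by (intro product_integrable_prod) auto
  have box_indicator: "(\<Prod>j<n. indicator {0..t} (s j) *\<^sub>R f j (s j)) = indicator ?B s *\<^sub>R (\<Prod>j<n. f j (s j))"
    if "s \<in> space ?M" for s
  proof (cases "s \<in> ?B")
    case True
    then have "(\<Prod>j<n. indicator {0..t} (s j) *\<^sub>R f j (s j)) = (\<Prod>j<n. f j (s j))"
      by (intro prod.cong refl) (use True in \<open>auto simp: indicator_def PiE_iff\<close>)
    then show ?thesis
      using True by simp
  next
    case False
    moreover have "s \<in> extensional {..<n}"
      using that by (simp add: space_PiM PiE_iff)
    ultimately obtain j where "j < n" "s j \<notin> {0..t}"
      by (auto simp: PiE_iff)
    then have "(\<Prod>j<n. indicator {0..t} (s j) *\<^sub>R f j (s j)) = 0"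
      by (intro prod_zero bexI[of _ j]) auto
    then show ?thesis
      using False by simp
  qed
  show "set_integrable ?M ?B (\<lambda>s. \<Prod>j<n. f j (s j))"
    unfolding set_integrable_def
    by (rule Bochner_Integration.integrable_cong[THEN iffD1, OF refl _ box_integrable]) (rule box_indicator)
  show "ord_simplex n t \<in> sets ?M"
    by (rule sets_ord_simplex)
  show "ord_simplex n t \<subseteq> ?B"
    by (auto simp: ord_simplex_def space_PiM PiE_def)
qed

lemma fun_upd_in_ord_simplex_Suc_iff:
  assumes y: "y \<in> space (PiM {..<n} (\<lambda>_. lborel :: real measure))"
  shows "y(n := z) \<in> ord_simplex (Suc n) t \<longleftrightarrow> 0 \<le> z \<and> z \<le> t \<and> y \<in> ord_simplex n z"
proof -
  define y' where "y' = y(n := z)"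
  have y'_old: "y' j = y j" if "j < n" for j
    using that by (simp add: y'_def)
  have y'_new: "y' n = z"
    by (simp add: y'_def)
  have "y' \<in> ord_simplex (Suc n) t \<longleftrightarrow> 0 \<le> z \<and> z \<le> t \<and> y \<in> ord_simplex n z"
  proof
    assume "y' \<in> ord_simplex (Suc n) t"
    then have bounds: "\<And>j. j < Suc n \<Longrightarrow> 0 \<le> y' j \<and> y' j \<le> t"
      and chain: "\<And>j. Suc j < Suc n \<Longrightarrow> y' j \<le> y' (Suc j)"
      unfolding ord_simplex_def by blast+
    have "y' j \<le> y' n" if "j < n" for j
      by (rule lift_Suc_mono_le_ivl[where N = "{..<n}"]) (use chain that in auto)
    then have "y j \<le> z" if "j < n" for j
      using that by (simp add: y'_old y'_new)
    moreover have "0 \<le> y j" if "j < n" for j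
      using bounds[of j] that by (simp add: y'_old)
    moreover have "y j \<le> y (Suc j)" if "Suc j < n" for j
      using chain[of j] that by (simp add: y'_old)
    moreover have "0 \<le> z" "z \<le> t"
      using bounds[of n] by (simp_all add: y'_new)
    ultimately show "0 \<le> z \<and> z \<le> t \<and> y \<in> ord_simplex n z"
      using y unfolding ord_simplex_def by auto
  next
    assume "0 \<le> z \<and> z \<le> t \<and> y \<in> ord_simplex n z"
    moreover have "y' \<in> space (PiM {..<Suc n} (\<lambda>_. lborel :: real measure))"
      using y by (auto simp: y'_def space_PiM PiE_def extensional_def)
    ultimately show "y' \<in> ord_simplex (Suc n) t"
      unfolding ord_simplex_def by (auto simp: less_Suc_eq y'_old y'_new)
  qed
  then show ?thesis
    by (simp add: y'_def)
qed

lemma set_integral_ord_simplex: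
  fixes f :: "nat \<Rightarrow> real \<Rightarrow> real"
  assumes f: "\<And>j. continuous_on UNIV (f j)" and "t \<ge> 0"
  shows "(LINT s : ord_simplex n t | PiM {..<n} (\<lambda>_. lborel). \<Prod>j<n. f j (s j)) = iterated_integral f n t"
  using \<open>t \<ge> 0\<close>
proof (induction n arbitrary: t)
  case 0
  show ?case
    by (simp add: set_lebesgue_integral_def ord_simplex_def PiM_empty lebesgue_integral_count_space_finite)
next
  case (Suc n)
  interpret product_sigma_finite "\<lambda>_::nat. lborel :: real measure"
    by standard
  let ?M = "PiM {..<n} (\<lambda>_. lborel :: real measure)"
  let ?g = "\<lambda>s. indicator (ord_simplex (Suc n) t) s *\<^sub>R (\<Prod>j<Suc n. f j (s j))"
  have inner: "(\<integral>y. ?g (y(n := z)) \<partial>?M) = indicator {0..t} z *\<^sub>R (f n z * iterated_integral f n z)" for z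
  proof -
    have "(\<integral>y. ?g (y(n := z)) \<partial>?M)
        = (\<integral>y. (indicator {0..t} z * f n z) * (indicator (ord_simplex n z) y *\<^sub>R (\<Prod>j<n. f j (y j))) \<partial>?M)"
      by (intro Bochner_Integration.integral_cong refl)
        (auto simp: fun_upd_in_ord_simplex_Suc_iff prod.lessThan_Suc indicator_def)
    also have "\<dots> = (indicator {0..t} z * f n z) * (LINT y : ord_simplex n z | ?M. \<Prod>j<n. f j (y j))"
      unfolding set_lebesgue_integral_def by (rule integral_mult_right_zero)
    also have "\<dots> = indicator {0..t} z *\<^sub>R (f n z * iterated_integral f n z)"
      using Suc.IH[of z] by (cases "z \<in> {0..t}") auto
    finally show ?thesis .
  qed
  have "(LINT s : ord_simplex (Suc n) t | PiM {..<Suc n} (\<lambda>_. lborel). \<Prod>j<Suc n. f j (s j))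
      = integral\<^sup>L (PiM (insert n {..<n}) (\<lambda>_. lborel)) ?g"
    unfolding set_lebesgue_integral_def lessThan_Suc ..
  also have "\<dots> = (\<integral>z. (\<integral>y. ?g (y(n := z)) \<partial>?M) \<partial>lborel)"
    using set_integrable_ord_simplex[OF f, of "Suc n" t]
    by (intro product_integral_insert_rev) (auto simp: set_integrable_def lessThan_Suc)
  also have "\<dots> = (LINT z : {0..t} | lborel. f n z * iterated_integral f n z)"
    unfolding inner set_lebesgue_integral_def ..
  also have "\<dots> = iterated_integral f (Suc n) t"
    by (simp add: set_borel_integral_eq_integral borel_integrable_atLeastAtMost'
        continuous_on_iterated_integral f continuous_on_subset[OF f] continuous_on_mult)
  finally show ?case .
qed

text \<open>Sigma only sees \<open>\<xi>\<close> on \<open>[0, \<infinity>)\<close>; extending each coordinate constantly to negative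
  times makes it continuous on all of \<open>\<real>\<close>, as Borel measurability on the product space needs.\<close>
definition coordinate_path :: "(real \<Rightarrow> real ^ 'd) \<Rightarrow> 'd \<Rightarrow> real \<Rightarrow> real" where
  "coordinate_path \<xi> i s = \<xi> (max 0 s) $ i"

lemma continuous_on_coordinate_path:
  assumes "continuous_on {0..} \<xi>"
  shows "continuous_on UNIV (coordinate_path \<xi> i)"
proof -
  have "continuous_on UNIV (\<lambda>s. \<xi> (max 0 s))"
    by (rule continuous_on_compose2[OF assms]) (auto intro!: continuous_intros)
  then show ?thesis
    unfolding coordinate_path_def[abs_def] by (intro continuous_intros)
qed

lemma integral_coordinate_path:
  assumes "\<xi> integrable_on {0..t}"
  shows "integral {0..t} (coordinate_path \<xi> i) = integral {0..t} \<xi> $ i"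
proof -
  have "integral {0..t} (coordinate_path \<xi> i) = integral {0..t} (\<lambda>s. \<xi> s $ i)"
    by (intro integral_cong) (simp add: coordinate_path_def)
  also have "\<dots> = integral {0..t} \<xi> $ i"
    using integral_linear[OF assms bounded_linear_vec_nth] by (simp add: comp_def)
  finally show ?thesis .
qed

lemma tendsto_average_coordinate_path:
  assumes "\<And>t. t \<ge> 0 \<Longrightarrow> \<xi> integrable_on {0..t}"
    and "((\<lambda>t. (1 / t) *\<^sub>R integral {0..t} \<xi>) \<longlongrightarrow> Q) at_top"
  shows "((\<lambda>t. integral {0..t} (coordinate_path \<xi> i) / t) \<longlongrightarrow> Q $ i) at_top"
proof -
  have "((\<lambda>t. ((1 / t) *\<^sub>R integral {0..t} \<xi>) $ i) \<longlongrightarrow> Q $ i) at_top"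
    using assms(2) by (rule tendsto_vec_nth)
  moreover have "\<forall>\<^sub>F t in at_top. ((1 / t) *\<^sub>R integral {0..t} \<xi>) $ i = integral {0..t} (coordinate_path \<xi> i) / t"
    using eventually_ge_at_top[of 0] by eventually_elim (simp add: integral_coordinate_path assms(1))
  ultimately show ?thesis
    by (rule Lim_transform_eventually)
qed

lemma eventually_integral_abs_coordinate_path_le:
  assumes cont: "continuous_on {0..} \<xi>"
    and int: "\<And>t. t \<ge> 0 \<Longrightarrow> (\<lambda>s. norm (\<xi> s)) integrable_on {0..t}"
    and limsup: "Limsup at_top (\<lambda>t. ereal (integral {0..t} (\<lambda>s. norm (\<xi> s)) / t)) < ereal C"
  shows "eventually (\<lambda>t. integral {0..t} (\<lambda>s. \<bar>coordinate_path \<xi> i s\<bar>) \<le> C * t) at_top"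
  using Limsup_lessD[OF limsup] eventually_gt_at_top[of 0]
proof eventually_elim
  case (elim t)
  have "integral {0..t} (\<lambda>s. \<bar>coordinate_path \<xi> i s\<bar>) \<le> integral {0..t} (\<lambda>s. norm (\<xi> s))"
  proof (rule integral_le)
    have "continuous_on {0..t} (coordinate_path \<xi> i)"
      using continuous_on_coordinate_path[OF cont] by (rule continuous_on_subset) simp
    then show "(\<lambda>s. \<bar>coordinate_path \<xi> i s\<bar>) integrable_on {0..t}"
      by (intro integrable_continuous_interval continuous_intros)
    show "(\<lambda>s. norm (\<xi> s)) integrable_on {0..t}"
      using int elim by simp
    show "\<bar>coordinate_path \<xi> i s\<bar> \<le> norm (\<xi> s)" if "s \<in> {0..t}" for s
      using that component_le_norm_cart[of "\<xi> s" i] by (simp add: coordinate_path_def)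
  qed
  also have "\<dots> \<le> C * t"
    using elim by (simp add: divide_less_eq)
  finally show ?case .
qed

lemma Sigma_eq_iterated_integral:
  assumes "continuous_on {0..} \<xi>" and "t \<ge> 0"
  shows "Sigma \<xi> is t = iterated_integral (\<lambda>j. coordinate_path \<xi> (is ! j)) (length is) t"
proof -
  have "Sigma \<xi> is t = (LINT s : ord_simplex (length is) t | PiM {..<length is} (\<lambda>_. lborel).
      \<Prod>j<length is. coordinate_path \<xi> (is ! j) (s j))"
    unfolding Sigma_def
    by (intro set_lebesgue_integral_cong sets_ord_simplex allI impI prod.cong refl)
      (auto simp: ord_simplex_def coordinate_path_def)
  also have "\<dots> = iterated_integral (\<lambda>j. coordinate_path \<xi> (is ! j)) (length is) t"
    using continuous_on_coordinate_path[OF assms(1)] assms(2) by (rule set_integral_ord_simplex)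
  finally show ?thesis .
qed

theorem theorem2p4:
  fixes \<xi> :: "real \<Rightarrow> real ^ 'd" and Q :: "real ^ 'd" and R :: real and "is" :: "'d list"
  assumes cont: "continuous_on {0..} \<xi>"
    and int1: "\<And>t. t \<ge> 0 \<Longrightarrow> \<xi> integrable_on {0..t}"
    and int2: "\<And>t. t \<ge> 0 \<Longrightarrow> (\<lambda>s. norm (\<xi> s)) integrable_on {0..t}"
    and limsupR: "Limsup at_top (\<lambda>t. ereal (integral {0..t} (\<lambda>s. norm (\<xi> s)) / t)) = ereal R"
    and limQ: "((\<lambda>t. (1 / t) *\<^sub>R integral {0..t} \<xi>) \<longlongrightarrow> Q) at_top"
    and nu: "length is \<ge> 1"
  shows "((\<lambda>t. Sigma \<xi> is t / t ^ length is)
          \<longlongrightarrow> (\<Prod>j<length is. Q $ (is ! j)) / fact (length is)) at_top"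
proof -
  let ?f = "\<lambda>j. coordinate_path \<xi> (is ! j)"
  have "((\<lambda>t. iterated_integral ?f (length is) t / t ^ length is)
      \<longlongrightarrow> (\<Prod>j<length is. Q $ (is ! j)) / fact (length is)) at_top"
  proof (rule tendsto_iterated_integral)
    show "continuous_on UNIV (?f j)" for j
      using cont by (rule continuous_on_coordinate_path)
    show "((\<lambda>t. integral {0..t} (?f j) / t) \<longlongrightarrow> Q $ (is ! j)) at_top" for j
      using int1 limQ by (rule tendsto_average_coordinate_path)
    have "Limsup at_top (\<lambda>t. ereal (integral {0..t} (\<lambda>s. norm (\<xi> s)) / t)) < ereal (R + 1)"
      using limsupR by simp
    then show "\<exists>C. \<forall>\<^sub>F t in at_top. integral {0..t} (\<lambda>s. \<bar>?f j s\<bar>) \<le> C * t" for j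
      using eventually_integral_abs_coordinate_path_le[OF cont int2] by blast
  qed
  moreover have "\<forall>\<^sub>F t in at_top. iterated_integral ?f (length is) t / t ^ length is = Sigma \<xi> is t / t ^ length is"
    using eventually_ge_at_top[of 0] by eventually_elim (simp add: Sigma_eq_iterated_integral[OF cont])
  ultimately show ?thesis
    by (rule Lim_transform_eventually)
qed

end
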